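(* Let $G$ be a hypo-efficient domination graph. Then $|V(G)|\leq\gamma(G)(\Delta(G)+1)-1$. Moreover: (i) Suppose $|V(G)|=\gamma(G)(\Delta(G)+1)-1$. Then (a) for every $\gamma$-set $D$ of $G$ there is exactly one vertex $y_D\in V(G)\setminus D$ such that $D$ is an efficient dominating set of $G-y_D$, and $y_D$ is adjacent to exactly $2$ vertices of $D$; and (b) every vertex belonging to some $\gamma$-set of $G$ has degree $\Delta(G)$. In particular, if every vertex of $G$ belongs to some $\gamma$-set of $G$, then $G$ is regular. (ii) If there exist a $\gamma$-set $D$ of $G$ and a vertex $y\in V(G)\setminus D$ such that $D$ is an efficient dominating set of $G-y$, $y$ is adjacent to exactly $2$ vertices of $D$, and every vertex of $D$ has degree $\Delta(G)$, then $|V(G)|=\gamma(G)(\Delta(G)+1)-1$.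
   Context: All graphs are finite, simple and undirected. For $v\in V(G)$, $N[v]$ is the closed neighborhood of $v$. A set $D\subseteq V(G)$ is dominating if every vertex of $G$ not in $D$ has a neighbor in $D$; $\gamma(G)$ is the minimum size of a dominating set, and a dominating set of size $\gamma(G)$ is a $\gamma$-set. A set $D\subseteq V(H)$ is an efficient dominating set (EDS) of a graph $H$ if $|N_H[v]\cap D|=1$ for every $v\in V(H)$. $G$ is a hypo-efficient domination graph if $G$ has no EDS but $G-v$ has at least one EDS for every $v\in V(G)$. $\Delta(G)$ is the maximum degree. *)

theory Defs
  imports Main
begin

definition simple_graph :: "'a set \<Rightarrow> ('a \<Rightarrow> 'a \<Rightarrow> bool) \<Rightarrow> bool" where
  "simple_graph V E \<longleftrightarrow> finite V \<and> (\<forall>u v. E u v \<longrightarrow> u \<in> V \<and> v \<in> V)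
     \<and> (\<forall>u v. E u v \<longrightarrow> E v u) \<and> (\<forall>v. \<not> E v v)"

definition nbhd :: "'a set \<Rightarrow> ('a \<Rightarrow> 'a \<Rightarrow> bool) \<Rightarrow> 'a \<Rightarrow> 'a set" where
  "nbhd V E v = {u \<in> V. E v u}"

definition closed_nbhd :: "'a set \<Rightarrow> ('a \<Rightarrow> 'a \<Rightarrow> bool) \<Rightarrow> 'a \<Rightarrow> 'a set" where
  "closed_nbhd V E v = insert v (nbhd V E v)"

definition degree :: "'a set \<Rightarrow> ('a \<Rightarrow> 'a \<Rightarrow> bool) \<Rightarrow> 'a \<Rightarrow> nat" where
  "degree V E v = card (nbhd V E v)"

definition max_degree :: "'a set \<Rightarrow> ('a \<Rightarrow> 'a \<Rightarrow> bool) \<Rightarrow> nat" where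
  "max_degree V E = (if V = {} then 0 else Max (degree V E ` V))"

definition regular :: "'a set \<Rightarrow> ('a \<Rightarrow> 'a \<Rightarrow> bool) \<Rightarrow> bool" where
  "regular V E \<longleftrightarrow> (\<forall>u\<in>V. \<forall>v\<in>V. degree V E u = degree V E v)"

definition del_vertex :: "('a \<Rightarrow> 'a \<Rightarrow> bool) \<Rightarrow> 'a \<Rightarrow> ('a \<Rightarrow> 'a \<Rightarrow> bool)" where
  "del_vertex E x = (\<lambda>u v. E u v \<and> u \<noteq> x \<and> v \<noteq> x)"

definition dominating :: "'a set \<Rightarrow> ('a \<Rightarrow> 'a \<Rightarrow> bool) \<Rightarrow> 'a set \<Rightarrow> bool" where
  "dominating V E D \<longleftrightarrow> D \<subseteq> V \<and> (\<forall>v \<in> V - D. \<exists>u \<in> D. E v u)"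

definition domination_number :: "'a set \<Rightarrow> ('a \<Rightarrow> 'a \<Rightarrow> bool) \<Rightarrow> nat" where
  "domination_number V E = (LEAST k. \<exists>D. dominating V E D \<and> card D = k)"

definition gamma_set :: "'a set \<Rightarrow> ('a \<Rightarrow> 'a \<Rightarrow> bool) \<Rightarrow> 'a set \<Rightarrow> bool" where
  "gamma_set V E D \<longleftrightarrow> dominating V E D \<and> card D = domination_number V E"

definition efficient_dominating :: "'a set \<Rightarrow> ('a \<Rightarrow> 'a \<Rightarrow> bool) \<Rightarrow> 'a set \<Rightarrow> bool" where
  "efficient_dominating V E D \<longleftrightarrow> D \<subseteq> V \<and> (\<forall>v \<in> V. card (closed_nbhd V E v \<inter> D) = 1)"

definition hypo_efficient_domination :: "'a set \<Rightarrow> ('a \<Rightarrow> 'a \<Rightarrow> bool) \<Rightarrow> bool" where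
  "hypo_efficient_domination V E \<longleftrightarrow>
     (\<nexists>D. efficient_dominating V E D) \<and>
     (\<forall>v \<in> V. \<exists>D. efficient_dominating (V - {v}) (del_vertex E v) D)"

end

theory Submission
  imports Defs
begin

text \<open>Count, with multiplicity, how often each vertex is dominated by a \<open>\<gamma>\<close>-set \<open>D\<close>:
  the sum over \<open>v\<close> of \<open>|N[v] \<inter> D|\<close> equals the sum over \<open>d \<in> D\<close> of \<open>deg d + 1\<close>, hence is at most
  \<open>\<gamma>(\<Delta> + 1)\<close>. Every vertex is dominated at least once, and some vertex twice because \<open>G\<close>
  has no efficient dominating set, so \<open>|V| + 1 \<le> \<gamma>(\<Delta> + 1)\<close>. In the extremal case both
  estimates are tight: every vertex of \<open>D\<close> has degree \<open>\<Delta>\<close>, and exactly one vertex \<open>y\<close> is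
  dominated twice, which says precisely that \<open>D\<close> is an efficient dominating set of \<open>G - y\<close>.
  Conversely, such a \<open>y\<close> together with maximal degrees on \<open>D\<close> makes the count equal to
  \<open>|V| + 1\<close> and to \<open>\<gamma>(\<Delta> + 1)\<close> at once.\<close>

definition domination_count :: "'a set \<Rightarrow> ('a \<Rightarrow> 'a \<Rightarrow> bool) \<Rightarrow> 'a set \<Rightarrow> nat" where
  "domination_count V E D = (\<Sum>v\<in>V. card (closed_nbhd V E v \<inter> D))"

lemma int_mult_Suc_minus_1_iff:
  fixes n g d :: nat
  shows "int n = int g * (int d + 1) - 1 \<longleftrightarrow> n + 1 = g * (d + 1)"
    and "int n \<le> int g * (int d + 1) - 1 \<longleftrightarrow> n + 1 \<le> g * (d + 1)"
proof -
  have "int g * (int d + 1) = int (g * (d + 1))"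
    by (simp add: distrib_left)
  then show "int n = int g * (int d + 1) - 1 \<longleftrightarrow> n + 1 = g * (d + 1)"
    and "int n \<le> int g * (int d + 1) - 1 \<longleftrightarrow> n + 1 \<le> g * (d + 1)"
    by linarith+
qed

lemma sum_le_card_imp_eq_1:
  fixes c :: "'b \<Rightarrow> nat"
  assumes "finite A" and "\<forall>v\<in>A. 1 \<le> c v" and "sum c A \<le> card A" and "v \<in> A"
  shows "c v = 1"
proof (rule ccontr)
  assume "c v \<noteq> 1"
  with assms have "(\<Sum>v\<in>A. 1::nat) < sum c A"
    by (intro sum_strict_mono_ex1) force+
  with assms(3) show False by simp
qed

lemma sum_eq_card_Suc_obtain:
  fixes c :: "'b \<Rightarrow> nat"
  assumes "finite A" and ge1: "\<forall>v\<in>A. 1 \<le> c v" and sum: "sum c A = card A + 1"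
  obtains y where "y \<in> A" and "c y = 2" and "\<forall>v\<in>A - {y}. c v = 1"
proof -
  have "\<not> (\<forall>v\<in>A. c v = 1)"
  proof
    assume "\<forall>v\<in>A. c v = 1"
    then have "sum c A = card A"
      by simp
    with sum show False by simp
  qed
  then obtain y where "y \<in> A" and "c y \<noteq> 1"
    by blast
  have "c y + sum c (A - {y}) = card A + 1"
    using sum \<open>finite A\<close> \<open>y \<in> A\<close> by (simp add: sum.remove)
  moreover have "card (A - {y}) \<le> sum c (A - {y})"
    using ge1 sum_mono[of "A - {y}" "\<lambda>_. 1" c] by simp
  moreover have "card (A - {y}) + 1 = card A"
    using card_Suc_Diff1[OF \<open>finite A\<close> \<open>y \<in> A\<close>] by simp
  moreover have "1 \<le> c y"
    using ge1 \<open>y \<in> A\<close> by blast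
  ultimately have "c y = 2" and "sum c (A - {y}) \<le> card (A - {y})"
    using \<open>c y \<noteq> 1\<close> by linarith+
  then show ?thesis
    using that[OF \<open>y \<in> A\<close>] sum_le_card_imp_eq_1[of "A - {y}" c] \<open>finite A\<close> ge1 by blast
qed

lemma closed_nbhd_del_vertex:
  "v \<noteq> y \<Longrightarrow> closed_nbhd (V - {y}) (del_vertex E y) v = closed_nbhd V E v - {y}"
  by (auto simp: closed_nbhd_def nbhd_def del_vertex_def)

lemma efficient_dominating_del_vertex_iff:
  assumes "y \<notin> D" and "D \<subseteq> V"
  shows "efficient_dominating (V - {y}) (del_vertex E y) D
    \<longleftrightarrow> (\<forall>v\<in>V - {y}. card (closed_nbhd V E v \<inter> D) = 1)"
proof -
  have "closed_nbhd (V - {y}) (del_vertex E y) v \<inter> D = closed_nbhd V E v \<inter> D" if "v \<noteq> y" for v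
    using closed_nbhd_del_vertex[OF that] assms(1) by blast
  with assms show ?thesis
    unfolding efficient_dominating_def by auto
qed

lemma nbhd_inter_eq_closed_nbhd_inter:
  "y \<notin> D \<Longrightarrow> nbhd V E y \<inter> D = closed_nbhd V E y \<inter> D"
  by (auto simp: closed_nbhd_def)

lemma gamma_set_exists: "\<exists>D. gamma_set V E D"
proof -
  have "dominating V E V"
    by (simp add: dominating_def)
  then have "\<exists>D. dominating V E D \<and> card D = domination_number V E"
    unfolding domination_number_def
    using LeastI_ex[of "\<lambda>k. \<exists>D. dominating V E D \<and> card D = k"] by blast
  then show ?thesis
    by (simp add: gamma_set_def)
qed

context
  fixes V :: "'a set" and E :: "'a \<Rightarrow> 'a \<Rightarrow> bool"
  assumes graph: "simple_graph V E"
begin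

lemma finite_vertices: "finite V"
  using graph by (simp add: simple_graph_def)

lemma finite_closed_nbhd: "finite (closed_nbhd V E v)"
  using graph by (auto simp: closed_nbhd_def nbhd_def simple_graph_def)

lemma card_closed_nbhd: "card (closed_nbhd V E v) = degree V E v + 1"
proof -
  have "v \<notin> nbhd V E v" and "finite (nbhd V E v)"
    using graph by (auto simp: nbhd_def simple_graph_def)
  then show ?thesis by (simp add: closed_nbhd_def degree_def)
qed

lemma mem_closed_nbhd_commute:
  "u \<in> V \<Longrightarrow> v \<in> V \<Longrightarrow> u \<in> closed_nbhd V E v \<longleftrightarrow> v \<in> closed_nbhd V E u"
  using graph by (auto simp: closed_nbhd_def nbhd_def simple_graph_def)

lemma degree_le_max_degree: "v \<in> V \<Longrightarrow> degree V E v \<le> max_degree V E"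
  using finite_vertices by (auto simp: max_degree_def)

lemma domination_count_eq_degree_sum:
  assumes "D \<subseteq> V"
  shows "domination_count V E D = (\<Sum>d\<in>D. degree V E d + 1)"
proof -
  have "finite D"
    using assms finite_vertices finite_subset by blast
  have "domination_count V E D = (\<Sum>v\<in>V. \<Sum>d\<in>D. if v \<in> closed_nbhd V E d then 1 else 0)"
    unfolding domination_count_def
  proof (intro sum.cong refl)
    fix v assume "v \<in> V"
    have "card (closed_nbhd V E v \<inter> D) = card (D \<inter> closed_nbhd V E v)"
      by (simp add: Int_commute)
    also have "\<dots> = (\<Sum>d\<in>D. if d \<in> closed_nbhd V E v then 1 else 0)"
      using sum.inter_restrict[OF \<open>finite D\<close>, of "\<lambda>_. 1::nat"] by simp
    also have "\<dots> = (\<Sum>d\<in>D. if v \<in> closed_nbhd V E d then 1 else 0)"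
      using mem_closed_nbhd_commute \<open>v \<in> V\<close> assms by (intro sum.cong) auto
    finally show "card (closed_nbhd V E v \<inter> D) = \<dots>" .
  qed
  also have "\<dots> = (\<Sum>d\<in>D. \<Sum>v\<in>V. if v \<in> closed_nbhd V E d then 1 else 0)"
    by (rule sum.swap)
  also have "\<dots> = (\<Sum>d\<in>D. card (closed_nbhd V E d))"
  proof (intro sum.cong refl)
    fix d assume "d \<in> D"
    then have "V \<inter> closed_nbhd V E d = closed_nbhd V E d"
      using assms by (auto simp: closed_nbhd_def nbhd_def)
    then show "(\<Sum>v\<in>V. if v \<in> closed_nbhd V E d then 1 else 0) = card (closed_nbhd V E d)"
      using sum.inter_restrict[OF finite_vertices, of "\<lambda>_. 1::nat" "closed_nbhd V E d"] by simp
  qed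
  finally show ?thesis
    by (simp add: card_closed_nbhd)
qed

lemma degree_sum_le:
  assumes "D \<subseteq> V"
  shows "(\<Sum>d\<in>D. degree V E d + 1) \<le> card D * (max_degree V E + 1)"
proof -
  have "(\<Sum>d\<in>D. degree V E d + 1) \<le> (\<Sum>d\<in>D. max_degree V E + 1)"
    using assms degree_le_max_degree by (intro sum_mono) auto
  then show ?thesis by simp
qed

lemma degree_sum_less:
  assumes "D \<subseteq> V" and "d \<in> D" and "degree V E d \<noteq> max_degree V E"
  shows "(\<Sum>d\<in>D. degree V E d + 1) < card D * (max_degree V E + 1)"
proof -
  have "finite D"
    using assms(1) finite_vertices finite_subset by blast
  moreover have "degree V E d < max_degree V E"
    using assms degree_le_max_degree[of d] by auto
  ultimately have "(\<Sum>d\<in>D. degree V E d + 1) < (\<Sum>d\<in>D. max_degree V E + 1)"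
    using assms degree_le_max_degree by (intro sum_strict_mono_ex1) auto
  then show ?thesis by simp
qed

lemma dominating_closed_nbhd_meets:
  assumes "dominating V E D" and "v \<in> V"
  shows "1 \<le> card (closed_nbhd V E v \<inter> D)"
proof -
  have "closed_nbhd V E v \<inter> D \<noteq> {}"
  proof (cases "v \<in> D")
    case False
    then obtain u where "u \<in> D" "E v u"
      using assms by (auto simp: dominating_def)
    moreover have "u \<in> V"
      using graph \<open>E v u\<close> by (auto simp: simple_graph_def)
    ultimately show ?thesis by (auto simp: closed_nbhd_def nbhd_def)
  qed (auto simp: closed_nbhd_def)
  then show ?thesis
    using finite_closed_nbhd by (simp add: Suc_le_eq card_gt_0_iff)
qed

lemma domination_count_gt_card:
  assumes "dominating V E D" and "\<nexists>D. efficient_dominating V E D"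
  shows "card V + 1 \<le> domination_count V E D"
proof (rule ccontr)
  assume "\<not> ?thesis"
  then have "\<forall>v\<in>V. card (closed_nbhd V E v \<inter> D) = 1"
    using sum_le_card_imp_eq_1[OF finite_vertices, of "\<lambda>v. card (closed_nbhd V E v \<inter> D)"]
      dominating_closed_nbhd_meets[OF assms(1)]
    by (auto simp: domination_count_def)
  then have "efficient_dominating V E D"
    using assms(1) by (simp add: efficient_dominating_def dominating_def)
  with assms(2) show False by blast
qed

lemma domination_count_del_vertex:
  assumes "y \<in> V" and "y \<notin> D" and "D \<subseteq> V"
    and "efficient_dominating (V - {y}) (del_vertex E y) D"
  shows "domination_count V E D + 1 = card (nbhd V E y \<inter> D) + card V"
proof -
  have "domination_count V E D
      = card (closed_nbhd V E y \<inter> D) + (\<Sum>v\<in>V - {y}. card (closed_nbhd V E v \<inter> D))"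
    unfolding domination_count_def using finite_vertices assms(1) by (simp add: sum.remove)
  also have "(\<Sum>v\<in>V - {y}. card (closed_nbhd V E v \<inter> D)) = card (V - {y})"
    using assms(4) efficient_dominating_del_vertex_iff[OF assms(2,3)] by simp
  moreover have "Suc (card (V - {y})) = card V"
    using card_Suc_Diff1[OF finite_vertices assms(1)] .
  ultimately show ?thesis
    using assms(2) by (simp add: nbhd_inter_eq_closed_nbhd_inter)
qed

text \<open>A second dominator of \<open>y\<close> would be a neighbour in \<open>D\<close> that is itself dominated twice.\<close>

lemma doubly_dominated_vertex_not_mem:
  assumes "card (closed_nbhd V E y \<inter> D) = 2" and "y \<in> V"
    and others: "\<forall>v\<in>V - {y}. card (closed_nbhd V E v \<inter> D) = 1"
  shows "y \<notin> D"
proof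
  assume "y \<in> D"
  then have "y \<in> closed_nbhd V E y \<inter> D"
    by (simp add: closed_nbhd_def)
  then have "card (closed_nbhd V E y \<inter> D - {y}) = 1"
    using assms(1) by (simp add: card_Diff_singleton)
  then obtain d where d: "d \<in> closed_nbhd V E y \<inter> D" "d \<noteq> y"
    by (metis Diff_iff card_1_singletonE insertI1 singletonD)
  then have "{d, y} \<subseteq> closed_nbhd V E d \<inter> D" and "d \<in> V"
    using graph \<open>y \<in> D\<close> \<open>y \<in> V\<close> by (auto simp: closed_nbhd_def nbhd_def simple_graph_def)
  moreover have "card {d, y} = 2"
    using d(2) by simp
  ultimately have "2 \<le> card (closed_nbhd V E d \<inter> D)"
    using card_mono[OF finite_Int[OF disjI1, OF finite_closed_nbhd]] by metis
  with others d(2) \<open>d \<in> V\<close> show False by simp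
qed

lemma obtain_doubly_dominated_vertex:
  assumes "dominating V E D" and "domination_count V E D = card V + 1"
  obtains y where "y \<in> V - D" and "card (nbhd V E y \<inter> D) = 2"
    and "efficient_dominating (V - {y}) (del_vertex E y) D"
proof -
  have "D \<subseteq> V" and ge1: "\<forall>v\<in>V. 1 \<le> card (closed_nbhd V E v \<inter> D)"
    using assms(1) dominating_closed_nbhd_meets by (auto simp: dominating_def)
  obtain y where "y \<in> V" and twice: "card (closed_nbhd V E y \<inter> D) = 2"
    and once: "\<forall>v\<in>V - {y}. card (closed_nbhd V E v \<inter> D) = 1"
    using sum_eq_card_Suc_obtain[OF finite_vertices ge1] assms(2)
    unfolding domination_count_def by blast
  have "y \<notin> D"
    using twice \<open>y \<in> V\<close> once by (rule doubly_dominated_vertex_not_mem)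
  show ?thesis
  proof
    show "y \<in> V - D"
      using \<open>y \<in> V\<close> \<open>y \<notin> D\<close> by blast
    show "card (nbhd V E y \<inter> D) = 2"
      using twice \<open>y \<notin> D\<close> by (simp add: nbhd_inter_eq_closed_nbhd_inter)
    show "efficient_dominating (V - {y}) (del_vertex E y) D"
      using efficient_dominating_del_vertex_iff[OF \<open>y \<notin> D\<close> \<open>D \<subseteq> V\<close>] once by blast
  qed
qed

lemma gamma_set_domination_count_le:
  assumes "gamma_set V E D"
  shows "domination_count V E D \<le> domination_number V E * (max_degree V E + 1)"
proof -
  have "D \<subseteq> V" and "card D = domination_number V E"
    using assms by (auto simp: gamma_set_def dominating_def)
  then show ?thesis
    using degree_sum_le domination_count_eq_degree_sum by metis
qed

lemma domination_count_gamma_set_max_degree: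
  assumes "gamma_set V E D" and "\<forall>d\<in>D. degree V E d = max_degree V E"
  shows "domination_count V E D = domination_number V E * (max_degree V E + 1)"
proof -
  have "D \<subseteq> V" and "card D = domination_number V E"
    using assms(1) by (auto simp: gamma_set_def dominating_def)
  then show ?thesis
    using assms(2) domination_count_eq_degree_sum by simp
qed

lemma card_Suc_le_if_no_efficient_dominating:
  assumes "\<nexists>D. efficient_dominating V E D"
  shows "card V + 1 \<le> domination_number V E * (max_degree V E + 1)"
proof -
  obtain D where D: "gamma_set V E D"
    using gamma_set_exists by blast
  then have "card V + 1 \<le> domination_count V E D"
    using domination_count_gt_card[OF _ assms] by (simp add: gamma_set_def)
  also have "\<dots> \<le> domination_number V E * (max_degree V E + 1)"
    using gamma_set_domination_count_le[OF D] .
  finally show ?thesis .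
qed

lemma extremal_gamma_set:
  assumes "\<nexists>D. efficient_dominating V E D"
    and extremal: "card V + 1 = domination_number V E * (max_degree V E + 1)"
    and "gamma_set V E D"
  shows "domination_count V E D = card V + 1"
    and "\<forall>d\<in>D. degree V E d = max_degree V E"
proof -
  have "dominating V E D" and "D \<subseteq> V" and "card D = domination_number V E"
    using assms(3) by (auto simp: gamma_set_def dominating_def)
  then have count_le: "domination_count V E D \<le> card V + 1"
    using gamma_set_domination_count_le[OF assms(3)] extremal by simp
  then show count: "domination_count V E D = card V + 1"
    using domination_count_gt_card[OF \<open>dominating V E D\<close> assms(1)] by simp
  show "\<forall>d\<in>D. degree V E d = max_degree V E"
  proof (rule ccontr)
    assume "\<not> ?thesis"
    then obtain d where "d \<in> D" and "degree V E d \<noteq> max_degree V E"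
      by blast
    then have "domination_count V E D < card D * (max_degree V E + 1)"
      using degree_sum_less[OF \<open>D \<subseteq> V\<close>] domination_count_eq_degree_sum[OF \<open>D \<subseteq> V\<close>] by simp
    with count extremal \<open>card D = domination_number V E\<close> show False by simp
  qed
qed

lemma domination_count_eq_card_Suc_iff:
  assumes "y \<in> V - D" and "D \<subseteq> V"
    and "efficient_dominating (V - {y}) (del_vertex E y) D"
  shows "domination_count V E D = card V + 1 \<longleftrightarrow> card (nbhd V E y \<inter> D) = 2"
  using domination_count_del_vertex[of y D] assms by auto

lemma unique_vertex_with_efficient_dominating_del_vertex:
  assumes "dominating V E D" and "domination_count V E D = card V + 1"
  shows "\<exists>!y. y \<in> V - D \<and> efficient_dominating (V - {y}) (del_vertex E y) D"
proof -
  have "D \<subseteq> V"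
    using assms(1) by (simp add: dominating_def)
  obtain y where y: "y \<in> V - D" "card (nbhd V E y \<inter> D) = 2"
    and eds: "efficient_dominating (V - {y}) (del_vertex E y) D"
    using obtain_doubly_dominated_vertex[OF assms] .
  have "y' = y" if "y' \<in> V - D" and "efficient_dominating (V - {y'}) (del_vertex E y') D" for y'
  proof (rule ccontr)
    assume "y' \<noteq> y"
    then have "card (closed_nbhd V E y \<inter> D) = 1"
      using efficient_dominating_del_vertex_iff[of y' D V E] that \<open>D \<subseteq> V\<close> y(1) by blast
    with y show False
      by (simp add: nbhd_inter_eq_closed_nbhd_inter)
  qed
  with y(1) eds show ?thesis by blast
qed

end

theorem corollary3p10:
  fixes V :: "'a set" and E :: "'a \<Rightarrow> 'a \<Rightarrow> bool"
  assumes "simple_graph V E"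
    and "hypo_efficient_domination V E"
  shows "int (card V) \<le> int (domination_number V E) * (int (max_degree V E) + 1) - 1
    \<and> (int (card V) = int (domination_number V E) * (int (max_degree V E) + 1) - 1 \<longrightarrow>
         (\<forall>D. gamma_set V E D \<longrightarrow>
            (\<exists>!y. y \<in> V - D \<and> efficient_dominating (V - {y}) (del_vertex E y) D)
            \<and> (\<forall>y. y \<in> V - D \<and> efficient_dominating (V - {y}) (del_vertex E y) D
                   \<longrightarrow> card (nbhd V E y \<inter> D) = 2))
       \<and> (\<forall>v \<in> V. (\<exists>D. gamma_set V E D \<and> v \<in> D) \<longrightarrow> degree V E v = max_degree V E)
       \<and> ((\<forall>v \<in> V. \<exists>D. gamma_set V E D \<and> v \<in> D) \<longrightarrow> regular V E))
    \<and> ((\<exists>D y. gamma_set V E D \<and> y \<in> V - D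
           \<and> efficient_dominating (V - {y}) (del_vertex E y) D
           \<and> card (nbhd V E y \<inter> D) = 2
           \<and> (\<forall>v \<in> D. degree V E v = max_degree V E))
       \<longrightarrow> int (card V) = int (domination_number V E) * (int (max_degree V E) + 1) - 1)"
proof -
  let ?extremal = "card V + 1 = domination_number V E * (max_degree V E + 1)"
  have graph: "simple_graph V E" and no_eds: "\<nexists>D. efficient_dominating V E D"
    using assms by (auto simp: hypo_efficient_domination_def)
  have gamma_sets: "(\<exists>!y. y \<in> V - D \<and> efficient_dominating (V - {y}) (del_vertex E y) D)
      \<and> (\<forall>y. y \<in> V - D \<and> efficient_dominating (V - {y}) (del_vertex E y) D
             \<longrightarrow> card (nbhd V E y \<inter> D) = 2)"
    if ?extremal and D: "gamma_set V E D" for D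
    using unique_vertex_with_efficient_dominating_del_vertex[OF graph]
      domination_count_eq_card_Suc_iff[OF graph] extremal_gamma_set(1)[OF graph no_eds that]
      D by (auto simp: gamma_set_def dominating_def)
  have max_degree: "degree V E v = max_degree V E"
    if ?extremal and "gamma_set V E D" and "v \<in> D" for D v
    using extremal_gamma_set(2)[OF graph no_eds that(1,2)] that(3) by blast
  have converse: ?extremal
    if "gamma_set V E D" "y \<in> V - D" "efficient_dominating (V - {y}) (del_vertex E y) D"
      "card (nbhd V E y \<inter> D) = 2" "\<forall>v \<in> D. degree V E v = max_degree V E" for D y
    using domination_count_eq_card_Suc_iff[OF graph that(2) _ that(3)] that(1,4)
      domination_count_gamma_set_max_degree[OF graph that(1,5)]
    by (simp add: gamma_set_def dominating_def)
  show ?thesis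
    unfolding int_mult_Suc_minus_1_iff regular_def
    using card_Suc_le_if_no_efficient_dominating[OF graph no_eds]
      gamma_sets max_degree converse by (intro conjI impI allI ballI; metis)
qed

end
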